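(* For all positive integers $m,n$, $\theta(K_{m,n}\times K_2)=\theta(K_{m,n})$.
   Context: The thickness $\theta(G)$ of a graph $G$ is the minimum number of planar subgraphs whose union is $G$. The Kronecker product $G\times H$ of graphs $G$ and $H$ is the graph with vertex set $V(G)\times V(H)$ in which $(g,h)$ and $(g',h')$ are adjacent if and only if $gg'\in E(G)$ and $hh'\in E(H)$. $K_{a,b}$ denotes the complete bipartite graph with parts of sizes $a$ and $b$. *)

theory Defs
  imports "HOL-Analysis.Analysis"
begin

definition simple_graph :: "'a set \<Rightarrow> 'a set set \<Rightarrow> bool" where
  "simple_graph V E \<longleftrightarrow> finite V \<and> (\<forall>e\<in>E. e \<subseteq> V \<and> card e = 2)"

definition planar :: "'a set \<Rightarrow> 'a set set \<Rightarrow> bool" where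
  "planar V E \<longleftrightarrow>
     (\<exists>(p :: 'a \<Rightarrow> complex) (c :: 'a set \<Rightarrow> real \<Rightarrow> complex).
        inj_on p V \<and>
        (\<forall>e\<in>E. arc (c e) \<and> {pathstart (c e), pathfinish (c e)} = p ` e) \<and>
        (\<forall>e\<in>E. \<forall>v\<in>V - e. p v \<notin> path_image (c e)) \<and>
        (\<forall>e\<in>E. \<forall>e'\<in>E. e \<noteq> e' \<longrightarrow>
            path_image (c e) \<inter> path_image (c e') \<subseteq> p ` (e \<inter> e')))"

text \<open>Thickness: the minimum number of planar subgraphs whose union is the graph.
  Subgraphs are taken spanning (vertex set V), which is harmless since isolated
  vertices do not affect planarity.\<close>

definition thickness :: "'a set \<Rightarrow> 'a set set \<Rightarrow> nat" where
  "thickness V E = (LEAST k. \<exists>Es :: nat \<Rightarrow> 'a set set.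
       (\<forall>i<k. Es i \<subseteq> E \<and> planar V (Es i)) \<and> (\<Union>i<k. Es i) = E)"

definition kron_verts :: "'a set \<Rightarrow> 'b set \<Rightarrow> ('a \<times> 'b) set" where
  "kron_verts V1 V2 = V1 \<times> V2"

definition kron_edges :: "'a set set \<Rightarrow> 'b set set \<Rightarrow> ('a \<times> 'b) set set" where
  "kron_edges E1 E2 = {{(g, h), (g', h')} | g g' h h'. {g, g'} \<in> E1 \<and> {h, h'} \<in> E2}"

definition Kbip_verts :: "nat \<Rightarrow> nat \<Rightarrow> (nat + nat) set" where
  "Kbip_verts m n = Inl ` {..<m} \<union> Inr ` {..<n}"

definition Kbip_edges :: "nat \<Rightarrow> nat \<Rightarrow> (nat + nat) set set" where
  "Kbip_edges m n = {{Inl i, Inr j} | i j. i < m \<and> j < n}"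

definition K2_verts :: "nat set" where "K2_verts = {0, 1}"
definition K2_edges :: "nat set set" where "K2_edges = {{0, 1}}"

end

theory Submission imports Defs begin

text \<open>If G is bipartite, G \<times> K2 is two disjoint copies of G: one copy puts the first
  colour class over the K2-vertex 0 and the second over 1, the other copy the reverse.
  A planar decomposition of G \<times> K2 restricts to one of G by looking at a single copy;
  conversely, for each planar piece of G the two copies can be drawn side by side,
  translated far enough apart to be disjoint, giving a planar piece of G \<times> K2.\<close>

definition plane_embedding ::
    "'a set \<Rightarrow> 'a set set \<Rightarrow> ('a \<Rightarrow> complex) \<Rightarrow> ('a set \<Rightarrow> real \<Rightarrow> complex) \<Rightarrow> bool" where
  "plane_embedding V E p c \<longleftrightarrow>
     inj_on p V \<and>
     (\<forall>e\<in>E. arc (c e) \<and> {pathstart (c e), pathfinish (c e)} = p ` e) \<and>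
     (\<forall>e\<in>E. \<forall>v\<in>V - e. p v \<notin> path_image (c e)) \<and>
     (\<forall>e\<in>E. \<forall>e'\<in>E. e \<noteq> e' \<longrightarrow> path_image (c e) \<inter> path_image (c e') \<subseteq> p ` (e \<inter> e'))"

definition drawing ::
    "'a set \<Rightarrow> 'a set set \<Rightarrow> ('a \<Rightarrow> complex) \<Rightarrow> ('a set \<Rightarrow> real \<Rightarrow> complex) \<Rightarrow> complex set" where
  "drawing V E p c = p ` V \<union> (\<Union>e\<in>E. path_image (c e))"

lemma planar_iff_plane_embedding: "planar V E \<longleftrightarrow> (\<exists>p c. plane_embedding V E p c)"
  by (simp add: planar_def plane_embedding_def)

lemma plane_embedding_pullback:
  assumes emb: "plane_embedding V' E' p c"
    and inj: "inj_on f V" and fV: "f ` V \<subseteq> V'"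
    and E: "\<And>e. e \<in> E \<Longrightarrow> e \<subseteq> V \<and> f ` e \<in> E'"
  shows "plane_embedding V E (p \<circ> f) (\<lambda>e. c (f ` e))"
  unfolding plane_embedding_def
proof (intro conjI ballI impI)
  show "inj_on (p \<circ> f) V"
    using emb inj fV by (meson comp_inj_on inj_on_subset plane_embedding_def)
next
  fix e assume "e \<in> E"
  then show "arc (c (f ` e))" "{pathstart (c (f ` e)), pathfinish (c (f ` e))} = (p \<circ> f) ` e"
    using emb E by (auto simp: plane_embedding_def image_comp)
next
  fix e v assume e: "e \<in> E" and v: "v \<in> V - e"
  have "f v \<in> V' - f ` e"
    using E[OF e] v inj fV by (auto simp: inj_on_def)
  then show "(p \<circ> f) v \<notin> path_image (c (f ` e))"
    using emb E[OF e] by (auto simp: plane_embedding_def)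
next
  fix e e' assume e: "e \<in> E" and e': "e' \<in> E" and "e \<noteq> e'"
  then have "f ` e \<noteq> f ` e'"
    using E inj by (metis inj_on_image_eq_iff)
  then have "path_image (c (f ` e)) \<inter> path_image (c (f ` e')) \<subseteq> p ` (f ` e \<inter> f ` e')"
    using emb E[OF e] E[OF e'] unfolding plane_embedding_def by blast
  also have "f ` e \<inter> f ` e' = f ` (e \<inter> e')"
    using E[OF e] E[OF e'] inj by (simp add: inj_on_image_Int)
  finally show "path_image (c (f ` e)) \<inter> path_image (c (f ` e')) \<subseteq> (p \<circ> f) ` (e \<inter> e')"
    by (simp add: image_comp)
qed

lemma planar_pullback:
  assumes "planar V' E'" and "inj_on f V" and "f ` V \<subseteq> V'"
    and "\<And>e. e \<in> E \<Longrightarrow> e \<subseteq> V \<and> f ` e \<in> E'"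
  shows "planar V E"
proof -
  obtain p c where "plane_embedding V' E' p c"
    using assms(1) planar_iff_plane_embedding by blast
  then show ?thesis
    using plane_embedding_pullback[OF _ assms(2-4)] planar_iff_plane_embedding by blast
qed

lemma planar_image:
  assumes "planar V E" and inj: "inj_on f V" and E: "\<And>e. e \<in> E \<Longrightarrow> e \<subseteq> V"
  shows "planar (f ` V) (image f ` E)"
proof (rule planar_pullback[OF \<open>planar V E\<close>])
  show "inj_on (inv_into V f) (f ` V)" "inv_into V f ` f ` V \<subseteq> V"
    using inj by (simp_all add: inj_on_inv_into)
  fix e assume "e \<in> image f ` E"
  then show "e \<subseteq> f ` V \<and> inv_into V f ` e \<in> E"
    using E inj by (auto simp: image_inv_into_cancel)
qed

lemma plane_embedding_translate:
  assumes emb: "plane_embedding V E p c"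
  shows "plane_embedding V E (\<lambda>v. t + p v) (\<lambda>e. (\<lambda>z. t + z) \<circ> c e)"
  unfolding plane_embedding_def
proof (intro conjI ballI impI)
  show "inj_on (\<lambda>v. t + p v) V"
    using emb by (simp add: plane_embedding_def inj_on_def)
next
  fix e assume "e \<in> E"
  then have "arc (c e)" and ends: "{pathstart (c e), pathfinish (c e)} = p ` e"
    using emb by (simp_all add: plane_embedding_def)
  then show "arc ((\<lambda>z. t + z) \<circ> c e)"
    by (simp add: arc_translation_eq)
  have "{pathstart ((\<lambda>z. t + z) \<circ> c e), pathfinish ((\<lambda>z. t + z) \<circ> c e)}
      = (\<lambda>z. t + z) ` {pathstart (c e), pathfinish (c e)}"
    by (simp add: pathstart_translation pathfinish_translation)
  also have "\<dots> = (\<lambda>v. t + p v) ` e"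
    by (simp only: ends image_image)
  finally show "{pathstart ((\<lambda>z. t + z) \<circ> c e), pathfinish ((\<lambda>z. t + z) \<circ> c e)}
      = (\<lambda>v. t + p v) ` e" .
next
  fix e v assume "e \<in> E" "v \<in> V - e"
  then show "t + p v \<notin> path_image ((\<lambda>z. t + z) \<circ> c e)"
    using emb by (auto simp: plane_embedding_def path_image_translation)
next
  fix e e' assume "e \<in> E" "e' \<in> E" "e \<noteq> e'"
  then have "path_image (c e) \<inter> path_image (c e') \<subseteq> p ` (e \<inter> e')"
    using emb by (simp add: plane_embedding_def)
  then have "(\<lambda>z. t + z) ` (path_image (c e) \<inter> path_image (c e')) \<subseteq> (\<lambda>v. t + p v) ` (e \<inter> e')"
    by (auto simp: image_image)
  then show "path_image ((\<lambda>z. t + z) \<circ> c e) \<inter> path_image ((\<lambda>z. t + z) \<circ> c e')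
      \<subseteq> (\<lambda>v. t + p v) ` (e \<inter> e')"
    by (simp add: path_image_translation image_Int)
qed

lemma drawing_translate:
  "drawing V E (\<lambda>v. t + p v) (\<lambda>e. (\<lambda>z. t + z) \<circ> c e) = (\<lambda>z. t + z) ` drawing V E p c"
  by (auto simp: drawing_def path_image_translation image_Un image_UN)

lemma bounded_drawing:
  assumes "plane_embedding V E p c" and "finite V" and "\<forall>e\<in>E. e \<subseteq> V"
  shows "bounded (drawing V E p c)"
proof -
  have "finite E"
    using assms(2,3) by (meson Pow_iff finite_Pow_iff finite_subset subsetI)
  moreover have "compact (path_image (c e))" if "e \<in> E" for e
    using assms(1) that by (auto simp: plane_embedding_def intro: compact_path_image arc_imp_path)
  ultimately have "compact (\<Union>e\<in>E. path_image (c e))"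
    by (rule compact_UN)
  moreover have "compact (p ` V)"
    using assms(2) by (simp add: finite_imp_compact)
  ultimately show ?thesis
    unfolding drawing_def by (simp add: compact_imp_bounded)
qed

lemma bounded_disjoint_translate:
  fixes S T :: "complex set"
  assumes "bounded S" and "bounded T"
  obtains t where "S \<inter> (\<lambda>z. t + z) ` T = {}"
proof -
  obtain r where S: "S \<subseteq> ball 0 r" and T: "T \<subseteq> ball 0 r"
    using assms bounded_subset_ballD by (metis bounded_Un le_sup_iff)
  have "S \<inter> (\<lambda>z. of_real (2 * r) + z) ` T = {}"
  proof (intro equals0I)
    fix x assume x: "x \<in> S \<inter> (\<lambda>z. of_real (2 * r) + z) ` T"
    then obtain y where "y \<in> T" and xy: "x = of_real (2 * r) + y"
      by blast
    then have "norm x < r" "norm y < r"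
      using x S T by auto
    moreover have "norm (of_real (2 * r) :: complex) \<le> norm (of_real (2 * r) + y) + norm y"
      by (metis add_diff_cancel_right' norm_triangle_ineq4)
    ultimately show False
      by (simp add: xy norm_of_real)
  qed
  then show thesis by (rule that)
qed

lemma plane_embedding_disjoint_union:
  assumes emb1: "plane_embedding A E1 p1 c1" and emb2: "plane_embedding B E2 p2 c2"
    and AB: "A \<inter> B = {}" and E1: "\<forall>e\<in>E1. e \<subseteq> A" and E2: "\<forall>e\<in>E2. e \<subseteq> B"
    and disj: "drawing A E1 p1 c1 \<inter> drawing B E2 p2 c2 = {}"
  shows "plane_embedding (A \<union> B) (E1 \<union> E2)
           (\<lambda>v. if v \<in> A then p1 v else p2 v) (\<lambda>e. if e \<in> E1 then c1 e else c2 e)"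
    (is "plane_embedding _ _ ?p ?c")
proof -
  have pB: "?p v = p2 v" if "v \<in> B" for v
    using that AB by auto
  have imA: "?p ` e = p1 ` e" if "e \<subseteq> A" for e
    using that by auto
  have imB: "?p ` e = p2 ` e" if "e \<subseteq> B" for e
    by (intro image_cong refl) (metis pB subsetD that)
  have "e \<notin> E1" if "e \<in> E2" for e
  proof
    assume "e \<in> E1"
    then have "e = {}" using that E1 E2 AB by blast
    with \<open>e \<in> E1\<close> emb1 show False by (auto simp: plane_embedding_def)
  qed
  then have cE2: "?c e = c2 e" if "e \<in> E2" for e
    using that by auto
  let ?D1 = "drawing A E1 p1 c1" and ?D2 = "drawing B E2 p2 c2"
  have D1: "p1 ` A \<subseteq> ?D1" "\<And>e. e \<in> E1 \<Longrightarrow> path_image (c1 e) \<subseteq> ?D1"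
    and D2: "p2 ` B \<subseteq> ?D2" "\<And>e. e \<in> E2 \<Longrightarrow> path_image (c2 e) \<subseteq> ?D2"
    by (auto simp: drawing_def)
  show ?thesis
    unfolding plane_embedding_def
  proof (intro conjI ballI impI)
    have "?p ` A \<inter> ?p ` B = {}"
      using imA[of A] imB[of B] D1(1) D2(1) disj by auto
    then show "inj_on ?p (A \<union> B)"
      using emb1 emb2 imA imB inj_on_cong[of A ?p p1] inj_on_cong[of B ?p p2] pB
      by (auto simp: plane_embedding_def inj_on_Un)
  next
    fix e assume "e \<in> E1 \<union> E2"
    then consider "e \<in> E1" | "e \<in> E2" by blast
    then have "arc (?c e) \<and> {pathstart (?c e), pathfinish (?c e)} = ?p ` e"
    proof cases
      case 1
      then show ?thesis using emb1 E1 imA by (simp add: plane_embedding_def)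
    next
      case 2
      then show ?thesis using emb2 E2 imB cE2 by (simp add: plane_embedding_def)
    qed
    then show "arc (?c e)" "{pathstart (?c e), pathfinish (?c e)} = ?p ` e"
      by simp_all
  next
    fix e v assume e: "e \<in> E1 \<union> E2" and v: "v \<in> A \<union> B - e"
    have "p1 v \<notin> path_image (c1 e)" if "e \<in> E1" "v \<in> A"
      using emb1 that v by (simp add: plane_embedding_def)
    moreover have "p2 v \<notin> path_image (c1 e)" if "e \<in> E1" "v \<in> B"
      using D1(2)[OF that(1)] D2(1) that(2) disj by blast
    moreover have "p1 v \<notin> path_image (c2 e)" if "e \<in> E2" "v \<in> A"
      using D2(2)[OF that(1)] D1(1) that(2) disj by blast
    moreover have "p2 v \<notin> path_image (c2 e)" if "e \<in> E2" "v \<in> B"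
      using emb2 that v by (simp add: plane_embedding_def)
    ultimately show "?p v \<notin> path_image (?c e)"
      using e v pB cE2 by (cases "e \<in> E1"; cases "v \<in> A") auto
  next
    fix e e' assume e: "e \<in> E1 \<union> E2" and e': "e' \<in> E1 \<union> E2" and "e \<noteq> e'"
    have "path_image (c1 e) \<inter> path_image (c1 e') \<subseteq> p1 ` (e \<inter> e')" if "e \<in> E1" "e' \<in> E1"
      using emb1 that \<open>e \<noteq> e'\<close> by (simp add: plane_embedding_def)
    moreover have "path_image (c2 e) \<inter> path_image (c2 e') \<subseteq> p2 ` (e \<inter> e')" if "e \<in> E2" "e' \<in> E2"
      using emb2 that \<open>e \<noteq> e'\<close> by (simp add: plane_embedding_def)
    moreover have "path_image (c1 e) \<inter> path_image (c2 e') = {}" if "e \<in> E1" "e' \<in> E2"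
      using D1(2)[OF that(1)] D2(2)[OF that(2)] disj by blast
    moreover have "path_image (c2 e) \<inter> path_image (c1 e') = {}" if "e \<in> E2" "e' \<in> E1"
      using D2(2)[OF that(1)] D1(2)[OF that(2)] disj by blast
    ultimately show "path_image (?c e) \<inter> path_image (?c e') \<subseteq> ?p ` (e \<inter> e')"
      using e e' E1 E2 cE2 imA[of "e \<inter> e'"] imB[of "e \<inter> e'"]
      by (cases "e \<in> E1"; cases "e' \<in> E1") (simp_all add: le_infI1)
  qed
qed

lemma planar_disjoint_union:
  assumes "planar A E1" and "planar B E2" and "A \<inter> B = {}" and "finite A" and "finite B"
    and E1: "\<forall>e\<in>E1. e \<subseteq> A" and E2: "\<forall>e\<in>E2. e \<subseteq> B"
  shows "planar (A \<union> B) (E1 \<union> E2)"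
proof -
  obtain p1 c1 p2 c2 where emb1: "plane_embedding A E1 p1 c1" and emb2: "plane_embedding B E2 p2 c2"
    using assms(1,2) by (auto simp: planar_iff_plane_embedding)
  obtain t where "drawing A E1 p1 c1 \<inter> (\<lambda>z. t + z) ` drawing B E2 p2 c2 = {}"
    by (rule bounded_disjoint_translate[OF bounded_drawing[OF emb1 \<open>finite A\<close> E1]
          bounded_drawing[OF emb2 \<open>finite B\<close> E2]])
  then have "plane_embedding (A \<union> B) (E1 \<union> E2)
      (\<lambda>v. if v \<in> A then p1 v else t + p2 v) (\<lambda>e. if e \<in> E1 then c1 e else (\<lambda>z. t + z) \<circ> c2 e)"
    using plane_embedding_disjoint_union[OF emb1 plane_embedding_translate[OF emb2] \<open>A \<inter> B = {}\<close> E1 E2]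
    by (simp add: drawing_translate)
  then show ?thesis
    unfolding planar_iff_plane_embedding by blast
qed

definition planar_cover :: "'a set \<Rightarrow> 'a set set \<Rightarrow> nat \<Rightarrow> bool" where
  "planar_cover V E k \<longleftrightarrow>
     (\<exists>Es :: nat \<Rightarrow> 'a set set. (\<forall>i<k. Es i \<subseteq> E \<and> planar V (Es i)) \<and> (\<Union>i<k. Es i) = E)"

lemma thickness_eq_Least_planar_cover: "thickness V E = (LEAST k. planar_cover V E k)"
  unfolding thickness_def planar_cover_def ..

lemma planar_cover_of_two_copies:
  assumes "planar_cover (f ` V \<union> g ` V) (image f ` E \<union> image g ` E) k"
    and inj: "inj_on f V" and E: "\<forall>e\<in>E. e \<subseteq> V"
  shows "planar_cover V E k"
proof -
  obtain Es where Es: "\<forall>i<k. Es i \<subseteq> image f ` E \<union> image g ` E \<and> planar (f ` V \<union> g ` V) (Es i)"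
    and cover: "(\<Union>i<k. Es i) = image f ` E \<union> image g ` E"
    using assms(1) unfolding planar_cover_def by iprover
  define Fs where "Fs i = {e \<in> E. f ` e \<in> Es i}" for i
  have "planar V (Fs i)" if "i < k" for i
    using Es that inj E by (intro planar_pullback[of _ "Es i" f]) (auto simp: Fs_def)
  moreover have "(\<Union>i<k. Fs i) = E"
    using cover by (auto simp: Fs_def)
  ultimately show ?thesis
    unfolding planar_cover_def by (intro exI[of _ Fs]) (auto simp: Fs_def)
qed

lemma two_copies_planar_cover:
  assumes "planar_cover V E k"
    and "inj_on f V" and "inj_on g V" and "f ` V \<inter> g ` V = {}"
    and "finite V" and E: "\<forall>e\<in>E. e \<subseteq> V"
  shows "planar_cover (f ` V \<union> g ` V) (image f ` E \<union> image g ` E) k"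
proof -
  obtain Fs where Fs: "\<forall>i<k. Fs i \<subseteq> E \<and> planar V (Fs i)" and cover: "(\<Union>i<k. Fs i) = E"
    using assms(1) unfolding planar_cover_def by iprover
  define Es where "Es i = image f ` Fs i \<union> image g ` Fs i" for i
  have "planar (f ` V \<union> g ` V) (Es i)" if "i < k" for i
  proof -
    have "planar V (Fs i)" and FsV: "\<forall>e\<in>Fs i. e \<subseteq> V"
      using Fs that E by auto
    then show ?thesis
      unfolding Es_def using assms(2-5)
      by (intro planar_disjoint_union planar_image) (auto simp: image_mono)
  qed
  moreover have "Es i \<subseteq> image f ` E \<union> image g ` E" if "i < k" for i
    using Fs that unfolding Es_def by blast
  moreover have "(\<Union>i<k. Es i) = image f ` E \<union> image g ` E"
    using cover by (auto simp: Es_def)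
  ultimately show ?thesis
    unfolding planar_cover_def by iprover
qed

lemma thickness_two_copies:
  assumes "inj_on f V" and "inj_on g V" and "f ` V \<inter> g ` V = {}"
    and "finite V" and "\<forall>e\<in>E. e \<subseteq> V"
  shows "thickness (f ` V \<union> g ` V) (image f ` E \<union> image g ` E) = thickness V E"
  unfolding thickness_eq_Least_planar_cover
  using planar_cover_of_two_copies two_copies_planar_cover assms by metis

text \<open>For a 2-colouring col, layer col b is the copy of G inside G \<times> K2 that places
  the vertices of colour b over the K2-vertex 0.\<close>

definition layer :: "('a \<Rightarrow> bool) \<Rightarrow> bool \<Rightarrow> 'a \<Rightarrow> 'a \<times> nat" where
  "layer col b v = (v, if col v = b then 0 else 1)"

lemma inj_layer: "inj (layer col b)"
  by (simp add: inj_def layer_def)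

lemma layer_images_disjoint: "layer col True ` X \<inter> layer col False ` Y = {}"
  by (auto simp: layer_def split: if_splits)

lemma kron_verts_K2: "kron_verts V K2_verts = layer col True ` V \<union> layer col False ` V"
  by (auto simp: kron_verts_def K2_verts_def layer_def image_iff split: if_splits)

lemma layer_image_edge:
  assumes "col g \<noteq> col g'"
  shows "layer col b ` {g, g'} = {(g, if col g = b then 0 else 1), (g', if col g = b then 1 else 0)}"
  using assms by (auto simp: layer_def)

lemma kron_edges_K2:
  assumes bip: "\<forall>e\<in>E. \<exists>g g'. e = {g, g'} \<and> col g \<noteq> col g'"
  shows "kron_edges E K2_edges = image (layer col True) ` E \<union> image (layer col False) ` E"
proof (intro equalityI subsetI)
  fix x assume "x \<in> kron_edges E K2_edges"
  then obtain g g' h h' where x: "x = {(g, h), (g', h')}" and e: "{g, g'} \<in> E"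
    and h: "{h, h'} = {0, 1}"
    unfolding kron_edges_def K2_edges_def by blast
  have "col g \<noteq> col g'"
    using bip e by (metis doubleton_eq_iff)
  define b where "b = (col g = (h = 0))"
  have "x = layer col b ` {g, g'}"
    using h unfolding x b_def layer_image_edge[of col g g', OF \<open>col g \<noteq> col g'\<close>] doubleton_eq_iff
    by auto
  then have "x \<in> image (layer col b) ` E"
    using e by blast
  moreover have "image (layer col b) ` E \<subseteq> image (layer col True) ` E \<union> image (layer col False) ` E"
    by (cases b) auto
  ultimately show "x \<in> image (layer col True) ` E \<union> image (layer col False) ` E"
    by blast
next
  fix x assume "x \<in> image (layer col True) ` E \<union> image (layer col False) ` E"
  then obtain b e where "e \<in> E" and x: "x = layer col b ` e"
    by blast
  then obtain g g' where e: "e = {g, g'}" and col: "col g \<noteq> col g'"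
    using bip by blast
  have "{if col g = b then 0 else 1, if col g = b then 1 else 0} \<in> K2_edges"
    by (auto simp: K2_edges_def insert_commute)
  then show "x \<in> kron_edges E K2_edges"
    unfolding kron_edges_def x e layer_image_edge[of col g g', OF col] using \<open>e \<in> E\<close> e by blast
qed

lemma thickness_kron_K2_bipartite:
  fixes col :: "'a \<Rightarrow> bool"
  assumes "finite V" and "\<forall>e\<in>E. e \<subseteq> V"
    and "\<forall>e\<in>E. \<exists>g g'. e = {g, g'} \<and> col g \<noteq> col g'"
  shows "thickness (kron_verts V K2_verts) (kron_edges E K2_edges) = thickness V E"
  unfolding kron_verts_K2[of V col] kron_edges_K2[OF assms(3)]
  using assms(1,2) by (intro thickness_two_copies inj_on_subset[OF inj_layer] layer_images_disjoint) auto

theorem corollary3p7: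
  fixes m n :: nat
  assumes "0 < m" and "0 < n"
  shows "thickness (kron_verts (Kbip_verts m n) K2_verts)
                   (kron_edges (Kbip_edges m n) K2_edges)
         = thickness (Kbip_verts m n) (Kbip_edges m n)"
proof (rule thickness_kron_K2_bipartite)
  show "finite (Kbip_verts m n)"
    by (simp add: Kbip_verts_def)
  show "\<forall>e\<in>Kbip_edges m n. e \<subseteq> Kbip_verts m n"
    by (auto simp: Kbip_edges_def Kbip_verts_def)
  show "\<forall>e\<in>Kbip_edges m n. \<exists>g g'. e = {g, g'} \<and> isl g \<noteq> isl g'"
  proof
    fix e assume "e \<in> Kbip_edges m n"
    then obtain i j where "e = {Inl i, Inr j}"
      by (auto simp: Kbip_edges_def)
    moreover have "isl (Inl i :: nat + nat) \<noteq> isl (Inr j :: nat + nat)"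
      by simp
    ultimately show "\<exists>g g'. e = {g, g'} \<and> isl g \<noteq> isl g'"
      by blast
  qed
qed

end
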